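(* Let $n\geq 13$ be an integer with $n\not\equiv 2\pmod 3$. If $f:V(C_n)\to\{-1,1,2\}$ is any function with $\sum_{v\in V(C_n)}f(v)=1$, then there exists a vertex $y\in V(C_n)$ such that $\sum_{z\in N_{C_n}[y]}f(z)<0$.
   Context: $C_n$ denotes the cycle on $n$ vertices, and for a vertex $y$ of $C_n$, $N_{C_n}[y]$ is the closed neighborhood of $y$ in $C_n$, i.e. $y$ together with its two neighbors on the cycle. *)

theory Defs
  imports Main
begin

definition cycle_vertices :: "nat \<Rightarrow> nat set" where
  "cycle_vertices n = {0..<n}"

definition cycle_adj :: "nat \<Rightarrow> nat \<Rightarrow> nat \<Rightarrow> bool" where
  "cycle_adj n u v \<longleftrightarrow> u < n \<and> v < n \<and> u \<noteq> v \<and> (v = (u + 1) mod n \<or> u = (v + 1) mod n)"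

definition cycle_closed_nbhd :: "nat \<Rightarrow> nat \<Rightarrow> nat set" where
  "cycle_closed_nbhd n y = {y} \<union> {z \<in> cycle_vertices n. cycle_adj n y z}"

end

theory Submission
  imports Defs
begin

text \<open>Suppose every closed-neighbourhood sum is nonnegative. Every vertex lies in exactly three
closed neighbourhoods, so these sums add up to 3. If f took only the values -1 and 2, its sum
would be congruent to -n modulo 3, which is impossible for n \<not>\<equiv> 2; hence some vertex v has
f v = 1. The five closed sums centred at distance at most 2 from v are then nonnegative and
add up to at most 3, and a finite check on the seven values around v rules this out.\<close>

lemma succ_mod_eq:
  fixes y n :: nat
  assumes "y < n"
  shows "(y + 1) mod n = (if y = n - 1 then 0 else y + 1)"
  using assms by (auto simp: mod_if)

lemma pred_mod_eq:
  fixes y n :: nat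
  assumes "y < n"
  shows "(y + (n - 1)) mod n = (if y = 0 then n - 1 else y - 1)"
proof (cases "y = 0")
  case False
  then have "y + (n - 1) = (y - 1) + n" using assms by simp
  then show ?thesis using assms False by (metis add.commute less_imp_diff_less mod_add_self1 mod_less)
qed (use assms in simp)

lemma eq_succ_mod_iff_eq_pred_mod:
  fixes u v n :: nat
  assumes "u < n" "v < n"
  shows "u = (v + 1) mod n \<longleftrightarrow> v = (u + (n - 1)) mod n"
  unfolding succ_mod_eq[OF assms(2)] pred_mod_eq[OF assms(1)] using assms by auto

lemma cycle_closed_nbhd_eq:
  assumes "n \<ge> 3" "y < n"
  shows "cycle_closed_nbhd n y = {(y + (n - 1)) mod n, y, (y + 1) mod n}"
proof -
  have "cycle_adj n y z \<longleftrightarrow> z = (y + (n - 1)) mod n \<or> z = (y + 1) mod n" if "z < n" for z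
    unfolding cycle_adj_def eq_succ_mod_iff_eq_pred_mod[OF assms(2) that]
    unfolding succ_mod_eq[OF assms(2)] pred_mod_eq[OF assms(2)] using assms that by auto
  then show ?thesis
    using assms unfolding cycle_closed_nbhd_def cycle_vertices_def by auto
qed

definition closed_sum :: "nat \<Rightarrow> (nat \<Rightarrow> 'a::comm_monoid_add) \<Rightarrow> nat \<Rightarrow> 'a" where
  "closed_sum n f y = f ((y + (n - 1)) mod n) + f y + f ((y + 1) mod n)"

lemma sum_cycle_closed_nbhd:
  assumes "n \<ge> 3" "y < n"
  shows "(\<Sum>z \<in> cycle_closed_nbhd n y. f z) = closed_sum n f y"
proof -
  have "(y + (n - 1)) mod n \<notin> {y, (y + 1) mod n}" "(y + 1) mod n \<noteq> y"
    unfolding succ_mod_eq[OF assms(2)] pred_mod_eq[OF assms(2)] using assms by auto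
  then show ?thesis
    using cycle_closed_nbhd_eq[OF assms] by (simp add: closed_sum_def add.assoc)
qed

lemma closed_sum_interior:
  assumes "0 < y" "y + 1 < n"
  shows "closed_sum n f y = f (y - 1) + f y + f (y + 1)"
proof -
  have "y < n" "y \<noteq> 0" "y \<noteq> n - 1" using assms by auto
  then show ?thesis
    unfolding closed_sum_def pred_mod_eq[OF \<open>y < n\<close>] succ_mod_eq[OF \<open>y < n\<close>] by simp
qed

lemma sum_rotate:
  fixes f :: "nat \<Rightarrow> 'a::comm_monoid_add"
  assumes "n > 0"
  shows "(\<Sum>y<n. f ((y + k) mod n)) = (\<Sum>y<n. f y)"
proof -
  let ?r = "\<lambda>y. (y + k) mod n"
  have "x \<in> ?r ` {..<n}" if "x < n" for x
  proof (rule image_eqI)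
    have "?r ((x + (n - k mod n)) mod n) = (x + (n - k mod n) + k) mod n"
      by (simp only: mod_add_left_eq)
    also have "\<dots> = (x + (n - k mod n) + k mod n) mod n"
      by (simp only: mod_add_right_eq)
    also have "\<dots> = (x + n) mod n"
      using mod_less_divisor[OF assms, of k] by (simp only: add.assoc le_add_diff_inverse2 less_imp_le)
    also have "\<dots> = x"
      using that by simp
    finally show "x = ?r ((x + (n - k mod n)) mod n)" ..
  qed (use assms in simp)
  then have "bij_betw ?r {..<n} {..<n}"
    using finite_surj_inj[of "{..<n}" ?r] assms
    by (auto simp: bij_betw_def)
  then show ?thesis by (rule sum.reindex_bij_betw)
qed

lemma closed_sum_rotate:
  "closed_sum n (\<lambda>x. f ((x + k) mod n)) y = closed_sum n f ((y + k) mod n)"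
proof -
  have "((y + (n - 1)) mod n + k) mod n = ((y + k) mod n + (n - 1)) mod n"
    and "((y + 1) mod n + k) mod n = ((y + k) mod n + 1) mod n"
    by (simp_all only: mod_add_left_eq mod_add_right_eq ac_simps)
  then show ?thesis
    unfolding closed_sum_def by (simp only:)
qed

lemma sum_closed_sum:
  fixes f :: "nat \<Rightarrow> int"
  assumes "n > 0"
  shows "(\<Sum>y<n. closed_sum n f y) = 3 * (\<Sum>y<n. f y)"
  unfolding closed_sum_def sum.distrib sum_rotate[OF assms, of f 1] sum_rotate[OF assms, of f "n - 1"]
  by simp

lemma three_dvd_sum_add_card:
  fixes f :: "nat \<Rightarrow> int"
  assumes "\<forall>v<n. f v \<in> {-1, 2}"
  shows "3 dvd (\<Sum>v<n. f v) + int n"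
proof -
  have "3 dvd (\<Sum>v<n. f v + 1)"
    using assms by (intro dvd_sum) auto
  then show ?thesis by (simp add: sum.distrib)
qed

lemma nonneg_windows_around_one_sum_gt_3:
  fixes a0 a1 a2 a4 a5 a6 :: int
  assumes "a0 \<in> {-1, 1, 2}" "a1 \<in> {-1, 1, 2}" "a2 \<in> {-1, 1, 2}"
    and "a4 \<in> {-1, 1, 2}" "a5 \<in> {-1, 1, 2}" "a6 \<in> {-1, 1, 2}"
    and "a0 + a1 + a2 \<ge> 0" "a1 + a2 + 1 \<ge> 0" "a2 + 1 + a4 \<ge> 0" "1 + a4 + a5 \<ge> 0" "a4 + a5 + a6 \<ge> 0"
  shows "(a0 + a1 + a2) + (a1 + a2 + 1) + (a2 + 1 + a4) + (1 + a4 + a5) + (a4 + a5 + a6) > 3"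
proof -
  have sign: "a = -1 \<or> 1 \<le> a \<and> a \<le> 2" if "a \<in> {-1, 1, 2 :: int}" for a
    using that by auto
  show ?thesis
    using sign[OF assms(1)] sign[OF assms(2)] sign[OF assms(3)]
      sign[OF assms(4)] sign[OF assms(5)] sign[OF assms(6)] assms(7-11)
    by (elim disjE conjE) linarith+
qed

lemma exists_neg_closed_sum_if_one_at_3:
  fixes g :: "nat \<Rightarrow> int"
  assumes "n \<ge> 7"
    and "\<forall>v<n. g v \<in> {-1, 1, 2}"
    and "(\<Sum>v<n. g v) = 1"
    and "g 3 = 1"
  shows "\<exists>y<n. closed_sum n g y < 0"
proof (rule ccontr)
  assume "\<not> ?thesis"
  then have nonneg: "closed_sum n g y \<ge> 0" if "y < n" for y
    using that by fastforce
  have "{1..5::nat} = {1, 2, 3, 4, 5}" by auto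
  then have "closed_sum n g 1 + closed_sum n g 2 + closed_sum n g 3 + closed_sum n g 4
      + closed_sum n g 5 = (\<Sum>y\<in>{1..5}. closed_sum n g y)"
    by simp
  also have "\<dots> \<le> (\<Sum>y<n. closed_sum n g y)"
    using assms(1) by (intro sum_mono2) (auto intro: nonneg)
  also have "\<dots> = 3"
    using assms(1,3) by (simp add: sum_closed_sum)
  finally have at_most_3: "closed_sum n g 1 + closed_sum n g 2 + closed_sum n g 3 + closed_sum n g 4
      + closed_sum n g 5 \<le> 3" .
  have windows: "closed_sum n g 1 = g 0 + g 1 + g 2" "closed_sum n g 2 = g 1 + g 2 + g 3"
    "closed_sum n g 3 = g 2 + g 3 + g 4" "closed_sum n g 4 = g 3 + g 4 + g 5"
    "closed_sum n g 5 = g 4 + g 5 + g 6"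
    using assms(1) by (simp_all add: closed_sum_interior eval_nat_numeral)
  have "g 0 \<in> {-1, 1, 2}" "g 1 \<in> {-1, 1, 2}" "g 2 \<in> {-1, 1, 2}"
    "g 4 \<in> {-1, 1, 2}" "g 5 \<in> {-1, 1, 2}" "g 6 \<in> {-1, 1, 2}"
    using assms(1,2) by simp_all
  moreover have "g 0 + g 1 + g 2 \<ge> 0" "g 1 + g 2 + 1 \<ge> 0" "g 2 + 1 + g 4 \<ge> 0"
    "1 + g 4 + g 5 \<ge> 0" "g 4 + g 5 + g 6 \<ge> 0"
    using nonneg[of 1] nonneg[of 2] nonneg[of 3] nonneg[of 4] nonneg[of 5] windows assms(1,4)
    by simp_all
  ultimately have "(g 0 + g 1 + g 2) + (g 1 + g 2 + 1) + (g 2 + 1 + g 4) + (1 + g 4 + g 5)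
      + (g 4 + g 5 + g 6) > 3"
    by (rule nonneg_windows_around_one_sum_gt_3)
  then show False
    using at_most_3 windows assms(4) by linarith
qed

theorem mainTheorem9:
  fixes n :: nat and f :: "nat \<Rightarrow> int"
  assumes "n \<ge> 13"
    and "n mod 3 \<noteq> 2"
    and "\<forall>v \<in> cycle_vertices n. f v \<in> {-1, 1, 2}"
    and "(\<Sum>v \<in> cycle_vertices n. f v) = 1"
  shows "\<exists>y \<in> cycle_vertices n. (\<Sum>z \<in> cycle_closed_nbhd n y. f z) < 0"
proof -
  have f_values: "\<forall>v<n. f v \<in> {-1, 1, 2}" and total: "(\<Sum>v<n. f v) = 1"
    using assms(3,4) by (auto simp: cycle_vertices_def atLeast0LessThan)
  have "\<exists>v<n. f v = 1"
  proof (rule ccontr)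
    assume "\<not> ?thesis"
    then have "3 dvd 1 + int n"
      using three_dvd_sum_add_card[of n f] f_values total by fastforce
    then show False using assms(2) by presburger
  qed
  then obtain v where "v < n" "f v = 1" by blast
  text \<open>Rotate the cycle so that v sits at position 3; only n \<ge> 7 is needed from here on.\<close>
  define k where "k = v + (n - 3)"
  have "(3 + k) mod n = v" using \<open>v < n\<close> assms(1) by (simp add: k_def)
  then obtain y where "y < n" "closed_sum n (\<lambda>x. f ((x + k) mod n)) y < 0"
    using exists_neg_closed_sum_if_one_at_3[of n "\<lambda>x. f ((x + k) mod n)"] assms(1) f_values total \<open>f v = 1\<close>
    by (auto simp: sum_rotate add.commute)
  then show ?thesis
    using assms(1) by (auto simp: closed_sum_rotate sum_cycle_closed_nbhd cycle_vertices_def)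
qed

end
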